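(* Let $G=(V,E)$ be a graph with $n$ vertices, $m$ edges and $k(G)$ connected components, such that $h(G)$ is defined. Then for every integer $i$ with $i>n-k(G)-h(G)$, \[[x^i]T_G(x,1)=\binom{m-i-1}{n-k(G)-i}-\sum_{\substack{C\in \mathcal{C}(G),\\ |C|<h(G)}} \binom{m-|C|-i-1}{m-n+k(G)-1}.\]
   Context: $T_G(x,y)$ is the Tutte polynomial of $G$, i.e. $T_G(x,y)=\sum_{A\subseteq E}(x-1)^{r-rk(A)}(y-1)^{|A|-rk(A)}$ with $rk(A)=n-k(A)$, $k(A)$ the number of components of the spanning subgraph $(V,A)$, and $r=n-k(G)$. $[x^i]f(x)$ denotes the coefficient of $x^i$. $\mathcal{C}(G)$ is the set of (edge sets of) cycles of $G$, and $|C|$ is the length of the cycle. $h(G)$ is the minimum number of edges of a subgraph of $G$ of corank $2$ (i.e. an edge set $A$ with $|A|-rk(A)=2$, possibly disconnected) that contains no cut edges (no edge of $A$ is a bridge of $(V,A)$). *)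

theory Defs
  imports "HOL-Computational_Algebra.Polynomial"
begin

text \<open>Finite multigraphs (loops and parallel edges allowed): vertex set V, edge set E,
  and an incidence map inc assigning to each edge its set of one (loop) or two endpoints.\<close>

definition wf_graph :: "'v set \<Rightarrow> 'e set \<Rightarrow> ('e \<Rightarrow> 'v set) \<Rightarrow> bool" where
  "wf_graph V E inc \<longleftrightarrow> finite V \<and> finite E \<and>
     (\<forall>e\<in>E. inc e \<subseteq> V \<and> card (inc e) \<in> {1, 2})"

definition edge_rel :: "('e \<Rightarrow> 'v set) \<Rightarrow> 'e set \<Rightarrow> ('v \<times> 'v) set" where
  "edge_rel inc A = {(u, w). \<exists>e\<in>A. u \<in> inc e \<and> w \<in> inc e}"

definition ncomp :: "'v set \<Rightarrow> ('e \<Rightarrow> 'v set) \<Rightarrow> 'e set \<Rightarrow> nat" where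
  "ncomp V inc A = card ((\<lambda>v. {w\<in>V. (v, w) \<in> (edge_rel inc A)\<^sup>*}) ` V)"

definition rk :: "'v set \<Rightarrow> ('e \<Rightarrow> 'v set) \<Rightarrow> 'e set \<Rightarrow> nat" where
  "rk V inc A = card V - ncomp V inc A"

definition corank :: "'v set \<Rightarrow> ('e \<Rightarrow> 'v set) \<Rightarrow> 'e set \<Rightarrow> nat" where
  "corank V inc A = card A - rk V inc A"

definition is_bridge :: "'v set \<Rightarrow> ('e \<Rightarrow> 'v set) \<Rightarrow> 'e set \<Rightarrow> 'e \<Rightarrow> bool" where
  "is_bridge V inc A e \<longleftrightarrow> e \<in> A \<and> ncomp V inc (A - {e}) > ncomp V inc A"

definition h_set :: "'v set \<Rightarrow> 'e set \<Rightarrow> ('e \<Rightarrow> 'v set) \<Rightarrow> 'e set set" where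
  "h_set V E inc = {A. A \<subseteq> E \<and> corank V inc A = 2 \<and> (\<forall>e\<in>A. \<not> is_bridge V inc A e)}"

definition h_defined :: "'v set \<Rightarrow> 'e set \<Rightarrow> ('e \<Rightarrow> 'v set) \<Rightarrow> bool" where
  "h_defined V E inc \<longleftrightarrow> h_set V E inc \<noteq> {}"

definition hG :: "'v set \<Rightarrow> 'e set \<Rightarrow> ('e \<Rightarrow> 'v set) \<Rightarrow> nat" where
  "hG V E inc = (LEAST c. \<exists>A\<in>h_set V E inc. card A = c)"

definition deg :: "('e \<Rightarrow> 'v set) \<Rightarrow> 'e set \<Rightarrow> 'v \<Rightarrow> nat" where
  "deg inc A v = (\<Sum>e\<in>{e\<in>A. v \<in> inc e}. if card (inc e) = 1 then 2 else 1)"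

definition cycles :: "'v set \<Rightarrow> 'e set \<Rightarrow> ('e \<Rightarrow> 'v set) \<Rightarrow> 'e set set" where
  "cycles V E inc = {C. C \<subseteq> E \<and> C \<noteq> {} \<and>
      (\<forall>v\<in>\<Union>(inc ` C). deg inc C v = 2) \<and>
      (\<forall>u\<in>\<Union>(inc ` C). \<forall>w\<in>\<Union>(inc ` C). (u, w) \<in> (edge_rel inc C)\<^sup>*)}"

text \<open>Tutte polynomial as a polynomial in x with coefficients polynomials in y.\<close>
definition tutte :: "'v set \<Rightarrow> 'e set \<Rightarrow> ('e \<Rightarrow> 'v set) \<Rightarrow> int poly poly" where
  "tutte V E inc = (\<Sum>A\<in>Pow E.
      [:[:-1:], 1:] ^ (rk V inc E - rk V inc A) * [:[:-1, 1:]:] ^ (card A - rk V inc A))"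

definition tutte_x1 :: "'v set \<Rightarrow> 'e set \<Rightarrow> ('e \<Rightarrow> 'v set) \<Rightarrow> int poly" where
  "tutte_x1 V E inc = map_poly (\<lambda>q. poly q 1) (tutte V E inc)"

definition xcoeff :: "int poly \<Rightarrow> int \<Rightarrow> int" where
  "xcoeff p i = (if i < 0 then 0 else coeff p (nat i))"

definition binom :: "int \<Rightarrow> int \<Rightarrow> int" where
  "binom a b = (if 0 \<le> a \<and> 0 \<le> b then int (nat a choose nat b) else 0)"

end

(*
  T_G(x,1) is the sum of (x-1)^(r-|A|) over the spanning forests A of G, where r = n - k(G).
  An edge set with fewer than h(G) edges has corank at most 1, so it is a forest or contains
  exactly one cycle: the indicator of "A is a forest" is 1 - #{cycles C with C <= A}.  For
  i > r - h(G) the coefficient of x^i in (x-1)^(r-|A|) vanishes as soon as |A| >= h(G), so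
  [x^i] T_G(x,1) becomes a sum over all edge sets minus, for every cycle C with |C| < h(G), a
  sum over the edge sets containing C.  Reading (x-1)^(r-j) for j > r as a Laurent series in
  1/x, each of these sums is a single binomial coefficient by Vandermonde's identity.
*)

theory Submission
  imports Defs "HOL-Computational_Algebra.Formal_Power_Series"
begin

section \<open>Coefficients of powers of \<open>x - 1\<close> and binomial sums\<close>

lemma binom_symmetric: "binom a b = binom a (a - b)"
  by (auto simp: binom_def binomial_eq_0 nat_diff_distrib intro: binomial_symmetric)

lemma coeff_x_minus_1_power:
  "coeff ([:-1, 1:] ^ n) k = (-1) ^ (n - k) * (of_nat (n choose k) :: 'a::comm_ring_1)"
proof -
  have "[:-1, 1:] ^ n = (monom 1 1 + [:-1:]) ^ n"
    by (simp add: monom_altdef)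
  also have "\<dots> = (\<Sum>j\<le>n. monom ((-1) ^ (n - j) * of_nat (n choose j)) j)"
    by (simp add: binomial_ring monom_power poly_const_pow of_nat_poly smult_monom mult.commute
        flip: smult_monom_mult mult_smult_right smult_smult)
  finally have expansion: "[:-1, 1:] ^ n = (\<Sum>j\<le>n. monom ((-1) ^ (n - j) * of_nat (n choose j)) j)" .
  show ?thesis
    unfolding expansion by (simp add: coeff_sum binomial_eq_0)
qed

text \<open>The coefficient of \<open>x^i\<close> in \<open>(x - 1)^n = x^n (1 - 1/x)^n\<close>, expanded in powers of \<open>1/x\<close>;
  for \<open>n < 0\<close> the coefficient \<open>(-1)^k (n gchoose k)\<close> of \<open>(1 - 1/x)^n\<close> with \<open>k = n - i\<close>
  equals \<open>binom (-i - 1) k\<close>.\<close>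

definition laurent_coeff :: "int \<Rightarrow> int \<Rightarrow> int" where
  "laurent_coeff i n = (if 0 \<le> n then (-1) ^ nat (n - i) * binom n i else binom (- i - 1) (n - i))"

lemma laurent_coeff_eq_0: "n < i \<Longrightarrow> laurent_coeff i n = 0"
  by (simp add: laurent_coeff_def binom_def binomial_eq_0)

lemma xcoeff_x_minus_1_power: "xcoeff ([:-1, 1:] ^ n) i = laurent_coeff i (int n)"
proof (cases "i < 0")
  case True
  then show ?thesis by (simp add: xcoeff_def laurent_coeff_def binom_def)
next
  case False
  then obtain k where i: "i = int k" using nonneg_int_cases by (metis not_less)
  have "nat (int n - int k) = n - k" by simp
  then show ?thesis by (simp add: i xcoeff_def laurent_coeff_def binom_def coeff_x_minus_1_power)
qed

lemma of_int_laurent_coeff: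
  assumes "i \<le> n"
  shows "of_int (laurent_coeff i n) = (of_int (- i - 1) :: real) gchoose nat (n - i)"
proof (cases "0 \<le> n")
  case True
  then obtain m where n: "n = int m" using nonneg_int_cases by blast
  have "(of_int (- i - 1) :: real) gchoose nat (n - i)
      = (-1) ^ nat (n - i) * (of_nat m gchoose nat (n - i))"
    using assms by (subst gbinomial_negated_upper) (simp add: n)
  also have "\<dots> = (-1) ^ nat (n - i) * of_int (binom n (n - i))"
    using assms by (simp add: n binom_def flip: binomial_gbinomial)
  finally show ?thesis using True by (simp add: laurent_coeff_def flip: binom_symmetric)
next
  case False
  then have "(of_int (- i - 1) :: real) = of_nat (nat (- i - 1))"
    using assms by simp
  then show ?thesis
    using False assms by (simp add: laurent_coeff_def binom_def binomial_gbinomial)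
qed

lemma sum_choose_laurent_coeff:
  fixes M :: nat and N i :: int
  assumes "N < int M"
  shows "(\<Sum>l\<le>M. int (M choose l) * laurent_coeff i (N - int l)) = binom (int M - i - 1) (N - i)"
proof (cases "i \<le> N")
  case False
  then show ?thesis by (simp add: laurent_coeff_eq_0 binom_def)
next
  case True
  define s where "s = nat (N - i)"
  let ?f = "\<lambda>l. int (M choose l) * laurent_coeff i (N - int l)"
  have "(\<Sum>l\<le>M. ?f l) = (\<Sum>l\<le>M + s. ?f l)"
    by (rule sum.mono_neutral_left) (auto simp: binomial_eq_0)
  also have "\<dots> = (\<Sum>l\<le>s. ?f l)"
    by (rule sum.mono_neutral_right) (auto simp: s_def laurent_coeff_eq_0)
  finally have truncate: "(\<Sum>l\<le>M. ?f l) = (\<Sum>l\<le>s. ?f l)" .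
  have "of_int (laurent_coeff i (N - int l)) = (of_int (- i - 1) :: real) gchoose (s - l)"
    if "l \<le> s" for l
  proof -
    have "i \<le> N - int l" "nat (N - int l - i) = s - l" using that True by (auto simp: s_def)
    then show ?thesis using of_int_laurent_coeff[of i "N - int l"] by simp
  qed
  then have "(of_int (\<Sum>l\<le>M. ?f l) :: real)
      = (\<Sum>l=0..s. (of_nat M gchoose l) * (of_int (- i - 1) gchoose (s - l)))"
    unfolding truncate by (simp add: atLeast0AtMost binomial_gbinomial)
  also have "\<dots> = (of_nat M + of_int (- i - 1)) gchoose s"
    by (rule gbinomial_Vandermonde)
  also have "of_nat M + of_int (- i - 1) = (of_nat (nat (int M - i - 1)) :: real)"
    using True assms by simp
  also have "\<dots> gchoose s = of_nat (nat (int M - i - 1) choose s)"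
    by (simp add: binomial_gbinomial)
  finally have "(\<Sum>l\<le>M. ?f l) = int (nat (int M - i - 1) choose s)"
    by (metis of_int_eq_iff of_int_of_nat_eq)
  then show ?thesis
    using True assms by (simp add: s_def binom_def)
qed

lemma sum_Pow_card:
  assumes "finite E"
  shows "(\<Sum>A\<in>Pow E. f (card A))
    = (\<Sum>j\<le>card E. of_nat (card E choose j) * (f j :: 'a::comm_semiring_1))"
proof -
  have "(\<Sum>A\<in>Pow E. f (card A)) = (\<Sum>j\<le>card E. \<Sum>A\<in>{A \<in> Pow E. card A = j}. f (card A))"
    by (rule sum.group[symmetric]) (use assms in \<open>auto intro: card_mono\<close>)
  also have "\<dots> = (\<Sum>j\<le>card E. of_nat (card E choose j) * f j)"
  proof (rule sum.cong)
    fix j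
    have "{A \<in> Pow E. card A = j} = {A. A \<subseteq> E \<and> card A = j}" by auto
    then show "(\<Sum>A\<in>{A \<in> Pow E. card A = j}. f (card A)) = of_nat (card E choose j) * f j"
      using n_subsets[OF assms, of j] by simp
  qed simp
  finally show ?thesis .
qed

lemma sum_supersets_card:
  assumes "finite E" "C \<subseteq> E"
  shows "(\<Sum>A\<in>{A \<in> Pow E. C \<subseteq> A}. f (card A))
    = (\<Sum>l\<le>card E - card C.
         of_nat ((card E - card C) choose l) * (f (card C + l) :: 'a::comm_semiring_1))"
proof -
  have fin: "finite C" "finite (E - C)" using assms finite_subset by auto
  have "{A \<in> Pow E. C \<subseteq> A} = (\<union>) C ` Pow (E - C)"
  proof (intro equalityI subsetI)
    fix A assume "A \<in> {A \<in> Pow E. C \<subseteq> A}"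
    then have "A = C \<union> (A - C)" "A - C \<in> Pow (E - C)" by auto
    then show "A \<in> (\<union>) C ` Pow (E - C)" by blast
  qed (use assms(2) in auto)
  moreover have "inj_on ((\<union>) C) (Pow (E - C))"
    by (auto simp: inj_on_def)
  ultimately have "(\<Sum>A\<in>{A \<in> Pow E. C \<subseteq> A}. f (card A)) = (\<Sum>B\<in>Pow (E - C). f (card (C \<union> B)))"
    by (simp add: sum.reindex)
  also have "\<dots> = (\<Sum>B\<in>Pow (E - C). f (card C + card B))"
  proof (rule sum.cong)
    fix B assume "B \<in> Pow (E - C)"
    then have "card (C \<union> B) = card C + card B"
      using fin by (intro card_Un_disjoint) (auto intro: finite_subset)
    then show "f (card (C \<union> B)) = f (card C + card B)" by simp
  qed simp
  also have "\<dots> = (\<Sum>l\<le>card (E - C). of_nat (card (E - C) choose l) * f (card C + l))"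
    using sum_Pow_card[OF fin(2), of "\<lambda>j. f (card C + j)"] .
  finally show ?thesis using assms fin by (simp add: card_Diff_subset)
qed

lemma xcoeff_sum: "xcoeff (\<Sum>x\<in>S. p x) i = (\<Sum>x\<in>S. xcoeff (p x) i)"
  by (simp add: xcoeff_def coeff_sum)

lemma sum_supersets_laurent_coeff:
  assumes "finite E" "C \<subseteq> E" "N < int (card E)"
  shows "(\<Sum>A\<in>{A \<in> Pow E. C \<subseteq> A}. laurent_coeff i (N - int (card A)))
    = binom (int (card E) - int (card C) - i - 1) (int (card E) - N - 1)"
proof -
  have "card C \<le> card E" using assms(1,2) by (rule card_mono)
  then have "N - int (card C) < int (card E - card C)" using assms(3) by simp
  then have "(\<Sum>A\<in>{A \<in> Pow E. C \<subseteq> A}. laurent_coeff i (N - int (card A)))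
      = binom (int (card E) - int (card C) - i - 1) (N - int (card C) - i)"
    using sum_supersets_card[OF assms(1,2), of "\<lambda>j. laurent_coeff i (N - int j)"]
      sum_choose_laurent_coeff[of "N - int (card C)" "card E - card C" i] \<open>card C \<le> card E\<close>
    by (simp add: algebra_simps)
  also have "\<dots> = binom (int (card E) - int (card C) - i - 1) (int (card E) - N - 1)"
    by (subst binom_symmetric) (simp add: algebra_simps)
  finally show ?thesis .
qed

lemma tutte_x1_eq_sum_forests:
  "tutte_x1 V E inc
    = (\<Sum>A\<in>Pow E. if corank V inc A = 0 then [:-1, 1:] ^ (rk V inc E - rk V inc A) else 0)"
  (is "_ = ?forests")
proof (rule poly_eqI)
  fix n
  have "poly (coeff ([:[:-1:], 1:] ^ a * [:[:-1, 1:]:] ^ b) n) 1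
      = coeff (if b = 0 then [:-1, 1 :: int:] ^ a else 0) n" for a b :: nat
  proof -
    have x_minus_1: "[:[:-1:], 1:] = ([:-1, 1:] :: int poly poly)" by (simp add: one_pCons)
    show ?thesis unfolding x_minus_1 by (simp add: poly_const_pow coeff_x_minus_1_power)
  qed
  then show "coeff (tutte_x1 V E inc) n = coeff ?forests n"
    unfolding tutte_x1_def tutte_def corank_def by (simp add: coeff_map_poly coeff_sum poly_sum)
qed

section \<open>Connected components and nullity\<close>

lemma obtain_minimal_subset:
  assumes "finite A" "P A"
  obtains B where "B \<subseteq> A" "P B" "\<And>B'. B' \<subset> B \<Longrightarrow> \<not> P B'"
proof -
  have f: "finite {B. B \<subseteq> A \<and> P B}" using assms(1) by simp
  have ne: "{B. B \<subseteq> A \<and> P B} \<noteq> {}" using assms(2) by auto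
  from finite_has_minimal[OF f ne] obtain m where
    m: "m \<in> {B. B \<subseteq> A \<and> P B}" "\<forall>b\<in>{B. B \<subseteq> A \<and> P B}. b \<le> m \<longrightarrow> m = b" by blast
  show ?thesis
  proof (rule that)
    show "m \<subseteq> A" "P m" using m(1) by auto
    fix B' assume B': "B' \<subset> m"
    show "\<not> P B'"
    proof
      assume "P B'"
      then have "B' \<in> {B. B \<subseteq> A \<and> P B}" using B' \<open>m \<subseteq> A\<close> by auto
      then have "m = B'" using m(2) B' by auto
      then show False using B' by simp
    qed
  qed
qed

lemma obtain_factor_map:
  assumes "\<And>u w. u \<in> V \<Longrightarrow> w \<in> V \<Longrightarrow> g u = g w \<Longrightarrow> f u = f w"
  obtains h where "\<And>v. v \<in> V \<Longrightarrow> f v = h (g v)"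
proof
  fix v assume v: "v \<in> V"
  have "(SOME u. u \<in> V \<and> g u = g v) \<in> V \<and> g (SOME u. u \<in> V \<and> g u = g v) = g v"
    by (rule someI[of _ v]) (use v in simp)
  then show "f v = f (SOME u. u \<in> V \<and> g u = g v)"
    using assms v by metis
qed

lemma card_image_le_if_coarser:
  assumes "finite V" "\<And>u w. u \<in> V \<Longrightarrow> w \<in> V \<Longrightarrow> g u = g w \<Longrightarrow> f u = f w"
  shows "card (f ` V) \<le> card (g ` V)"
proof -
  obtain h where h: "\<And>v. v \<in> V \<Longrightarrow> f v = h (g v)" using obtain_factor_map assms(2) by blast
  then have "f ` V = h ` g ` V" by (auto simp: image_image)
  then show ?thesis using assms(1) by (simp add: card_image_le)
qed

lemma card_image_less_if_coarser:
  assumes "finite V" "\<And>u w. u \<in> V \<Longrightarrow> w \<in> V \<Longrightarrow> g u = g w \<Longrightarrow> f u = f w"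
    and "u \<in> V" "w \<in> V" "g u \<noteq> g w" "f u = f w"
  shows "card (f ` V) < card (g ` V)"
proof -
  obtain h where h: "\<And>v. v \<in> V \<Longrightarrow> f v = h (g v)" using obtain_factor_map assms(2) by blast
  then have fV: "f ` V = h ` g ` V" by (auto simp: image_image)
  have "\<not> inj_on h (g ` V)"
    using assms(3-6) h by (auto simp: inj_on_def)
  then have "card (h ` g ` V) \<noteq> card (g ` V)"
    using assms(1) eq_card_imp_inj_on by blast
  then show ?thesis using assms(1) fV card_image_le[of "g ` V" h] by simp
qed

lemma card_image_le_Suc_if_coarser:
  assumes "finite V" "\<And>u w. u \<in> V \<Longrightarrow> w \<in> V \<Longrightarrow> g u = g w \<Longrightarrow> f u = f w"
    and "a \<in> V"
    and "\<And>u w. u \<in> V \<Longrightarrow> w \<in> V \<Longrightarrow> f u = f w \<Longrightarrow> g u \<noteq> g a \<Longrightarrow> g w \<noteq> g a \<Longrightarrow> g u = g w"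
  shows "card (g ` V) \<le> Suc (card (f ` V))"
proof -
  obtain h where h: "\<And>v. v \<in> V \<Longrightarrow> f v = h (g v)" using obtain_factor_map assms(2) by blast
  then have fV: "f ` V = h ` g ` V" by (auto simp: image_image)
  have "inj_on h (g ` V - {g a})"
    using assms(4) h by (auto simp: inj_on_def)
  then have "card (g ` V - {g a}) \<le> card (f ` V)"
    unfolding fV using assms(1) by (metis Diff_subset card_image card_mono finite_imageI image_mono)
  then show ?thesis using assms(1,3) by (simp add: card_Diff_singleton)
qed

locale multigraph =
  fixes V :: "'v set" and E :: "'e set" and inc :: "'e \<Rightarrow> 'v set"
  assumes wf_graph: "wf_graph V E inc"
begin

lemma finite_V: "finite V" and finite_E: "finite E"
  using wf_graph by (auto simp: wf_graph_def)

lemma finite_edge_set: "A \<subseteq> E \<Longrightarrow> finite A"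
  using finite_E by (rule finite_subset[rotated])

lemma inc_subset_V: "e \<in> E \<Longrightarrow> inc e \<subseteq> V"
  using wf_graph by (auto simp: wf_graph_def)

lemma card_inc: "e \<in> E \<Longrightarrow> card (inc e) = 1 \<or> card (inc e) = 2"
  using wf_graph by (auto simp: wf_graph_def)

lemma inc_nonempty: "e \<in> E \<Longrightarrow> inc e \<noteq> {}"
  using card_inc by fastforce

lemma obtain_ends:
  assumes "e \<in> E"
  obtains a b where "inc e = {a, b}"
  using card_inc[OF assms] by (metis card_1_singletonE card_2_iff insert_absorb2)

abbreviation reach :: "'e set \<Rightarrow> ('v \<times> 'v) set" where
  "reach A \<equiv> (edge_rel inc A)\<^sup>*"

definition component :: "'e set \<Rightarrow> 'v \<Rightarrow> 'v set" where
  "component A v = {w \<in> V. (v, w) \<in> reach A}"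

abbreviation nc :: "'e set \<Rightarrow> nat" where
  "nc A \<equiv> ncomp V inc A"

lemma nc_eq_card_components: "nc A = card (component A ` V)"
  by (simp add: ncomp_def component_def)

lemma in_edge_rel_iff: "(u, w) \<in> edge_rel inc A \<longleftrightarrow> (\<exists>e\<in>A. u \<in> inc e \<and> w \<in> inc e)"
  by (simp add: edge_rel_def)

lemma sym_reach: "(u, w) \<in> reach A \<Longrightarrow> (w, u) \<in> reach A"
proof (induction rule: rtrancl_induct)
  case (step y z)
  then have "(z, y) \<in> edge_rel inc A" by (auto simp: in_edge_rel_iff)
  then show ?case using step by (meson converse_rtrancl_into_rtrancl)
qed simp

lemma reach_mono: "A \<subseteq> B \<Longrightarrow> (u, w) \<in> reach A \<Longrightarrow> (u, w) \<in> reach B"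
  by (rule subsetD[OF rtrancl_mono]) (auto simp: edge_rel_def)

lemma reach_first_edge:
  assumes "(v, w) \<in> reach A" "w \<noteq> v"
  obtains e where "e \<in> A" "v \<in> inc e"
  using assms by (cases rule: converse_rtranclE) (auto simp: in_edge_rel_iff)

lemma component_eq_iff:
  assumes "u \<in> V" "w \<in> V"
  shows "component A u = component A w \<longleftrightarrow> (u, w) \<in> reach A"
proof
  assume "component A u = component A w"
  then show "(u, w) \<in> reach A" using assms by (auto simp: component_def)
next
  assume "(u, w) \<in> reach A"
  then show "component A u = component A w"
    unfolding component_def using sym_reach by (blast intro: rtrancl_trans)
qed

lemma nc_le_card_V: "nc A \<le> card V"
  unfolding nc_eq_card_components using card_image_le finite_V by blast

lemma nc_empty: "nc {} = card V"
proof -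
  have "component {} v = {v}" if "v \<in> V" for v
    using that by (auto simp: component_def edge_rel_def)
  then have "inj_on (component {}) V" by (auto intro: inj_onI)
  then show ?thesis unfolding nc_eq_card_components by (simp add: card_image)
qed

definition joined :: "'e set \<Rightarrow> 'e \<Rightarrow> bool" where
  "joined A e \<longleftrightarrow> (\<forall>a\<in>inc e. \<forall>b\<in>inc e. (a, b) \<in> reach A)"

lemma reach_insertD:
  assumes "(u, w) \<in> reach (insert e A)"
  shows "(u, w) \<in> reach A \<or> ((\<exists>a\<in>inc e. (u, a) \<in> reach A) \<and> (\<exists>b\<in>inc e. (b, w) \<in> reach A))"
  using assms
proof (induction rule: rtrancl_induct)
  case (step x y)
  from step(2) obtain e' where e': "e' \<in> insert e A" "x \<in> inc e'" "y \<in> inc e'"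
    by (auto simp: in_edge_rel_iff)
  show ?case
  proof (cases "e' \<in> A")
    case True
    then have "(x, y) \<in> edge_rel inc A" using e' by (auto simp: in_edge_rel_iff)
    then have "(x, y) \<in> reach A" by blast
    then show ?thesis using step(3) by (meson rtrancl_trans)
  next
    case False
    then show ?thesis using step(3) e' by auto
  qed
qed simp

lemma reach_insert_joined:
  assumes "joined A e"
  shows "reach (insert e A) = reach A"
proof (intro equalityI subsetI)
  fix p assume p: "p \<in> reach (insert e A)"
  obtain u w where "p = (u, w)" by fastforce
  then show "p \<in> reach A"
    using reach_insertD[of u w] p assms unfolding joined_def by (meson rtrancl_trans)
qed (use reach_mono[of A "insert e A"] in auto)

lemma nc_insert_joined: "joined A e \<Longrightarrow> nc (insert e A) = nc A"
  by (simp add: ncomp_def reach_insert_joined)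

lemma component_coarser:
  assumes "A \<subseteq> B" "u \<in> V" "w \<in> V" "component A u = component A w"
  shows "component B u = component B w"
  using assms reach_mono component_eq_iff by blast

lemma nc_antimono: "A \<subseteq> B \<Longrightarrow> nc B \<le> nc A"
  unfolding nc_eq_card_components
  by (rule card_image_le_if_coarser[OF finite_V]) (rule component_coarser)

lemma nc_insert_not_joined:
  assumes "e \<in> E" "\<not> joined A e"
  shows "nc (insert e A) < nc A"
proof -
  from assms(2) obtain a b where ab: "a \<in> inc e" "b \<in> inc e" "(a, b) \<notin> reach A"
    unfolding joined_def by blast
  have V: "a \<in> V" "b \<in> V" using ab assms(1) inc_subset_V by auto
  have "(a, b) \<in> edge_rel inc (insert e A)"
    using ab by (auto simp: in_edge_rel_iff)
  then have "component (insert e A) a = component (insert e A) b"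
    using V component_eq_iff by blast
  moreover have "component A a \<noteq> component A b"
    using ab V component_eq_iff by blast
  ultimately show ?thesis unfolding nc_eq_card_components
    using component_coarser[OF subset_insertI]
    by (intro card_image_less_if_coarser[OF finite_V _ V])
qed

lemma nc_le_Suc_nc_insert:
  assumes "A \<subseteq> E" "e \<in> E"
  shows "nc A \<le> Suc (nc (insert e A))"
proof -
  obtain a b where ab: "inc e = {a, b}" using obtain_ends assms(2) by blast
  have V: "a \<in> V" "b \<in> V" using ab inc_subset_V assms(2) by auto
  have "component A u = component A w"
    if "u \<in> V" "w \<in> V" "component (insert e A) u = component (insert e A) w"
      "component A u \<noteq> component A a" "component A w \<noteq> component A a" for u w
  proof -
    have "(u, w) \<in> reach (insert e A)" using that component_eq_iff by blast
    from reach_insertD[OF this] show ?thesis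
    proof
      assume "(\<exists>a\<in>inc e. (u, a) \<in> reach A) \<and> (\<exists>b\<in>inc e. (b, w) \<in> reach A)"
      then have "component A u \<in> {component A a, component A b}"
        "component A w \<in> {component A a, component A b}"
        using ab V that(1,2) component_eq_iff sym_reach by auto
      then show ?thesis using that(4,5) by auto
    qed (use that component_eq_iff in blast)
  qed
  then show ?thesis unfolding nc_eq_card_components
    using component_coarser[OF subset_insertI]
    by (intro card_image_le_Suc_if_coarser[OF finite_V _ V(1)])
qed

lemma card_V_le_nc_plus_card: "A \<subseteq> E \<Longrightarrow> card V \<le> nc A + card A"
proof (induction A rule: infinite_finite_induct)
  case (infinite A) then show ?case using finite_edge_set by blast
next
  case empty then show ?case by (simp add: nc_empty)
next
  case (insert e A)
  then show ?case using nc_le_Suc_nc_insert[of A e] by simp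
qed

text \<open>The corank, computed in \<open>int\<close> so that no truncated subtraction occurs.\<close>

definition nullity :: "'e set \<Rightarrow> int" where
  "nullity A = int (card A) - int (card V) + int (nc A)"

lemma nullity_nonneg: "A \<subseteq> E \<Longrightarrow> 0 \<le> nullity A"
  using card_V_le_nc_plus_card[of A] unfolding nullity_def by linarith

lemma corank_eq_nullity: "A \<subseteq> E \<Longrightarrow> int (corank V inc A) = nullity A"
  using card_V_le_nc_plus_card[of A] nc_le_card_V[of A]
  unfolding nullity_def corank_def rk_def by linarith

lemma rk_eq: "int (rk V inc A) = int (card V) - int (nc A)"
  using nc_le_card_V[of A] unfolding rk_def by linarith

lemma nullity_empty: "nullity {} = 0"
  by (simp add: nullity_def nc_empty)

lemma nullity_insert:
  assumes "A \<subseteq> E" "e \<in> E" "e \<notin> A"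
  shows "nullity (insert e A) = nullity A + (if joined A e then 1 else 0)"
proof -
  have "card (insert e A) = Suc (card A)" using assms(3) finite_edge_set[OF assms(1)] by simp
  moreover have "nc (insert e A) + 1 = nc A" if "\<not> joined A e"
    using nc_insert_not_joined[OF assms(2) that] nc_le_Suc_nc_insert[OF assms(1,2)] by linarith
  ultimately show ?thesis using nc_insert_joined unfolding nullity_def by auto
qed

lemma nullity_remove:
  assumes "A \<subseteq> E" "e \<in> A"
  shows "nullity A = nullity (A - {e}) + (if joined (A - {e}) e then 1 else 0)"
proof -
  have "insert e (A - {e}) = A" "A - {e} \<subseteq> E" "e \<in> E" using assms by auto
  then show ?thesis using nullity_insert[of "A - {e}" e] by simp
qed

lemma nullity_mono:
  assumes "B \<subseteq> A" "A \<subseteq> E"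
  shows "nullity B \<le> nullity A"
proof -
  have "nullity B \<le> nullity (B \<union> D)" if "finite D" "D \<subseteq> A - B" for D
    using that
  proof (induction D rule: finite_induct)
    case (insert e D)
    then have "B \<union> D \<subseteq> E" "e \<in> E" "e \<notin> B \<union> D" using assms by auto
    then have "nullity (B \<union> D) \<le> nullity (insert e (B \<union> D))"
      using nullity_insert[of "B \<union> D" e] by simp
    then show ?case using insert by simp
  qed simp
  moreover have "finite (A - B)" using finite_edge_set assms(2) by blast
  moreover have "B \<union> (A - B) = A" using assms(1) by blast
  ultimately show ?thesis by (metis subset_refl)
qed

section \<open>Cycles\<close>

definition support :: "'e set \<Rightarrow> 'v set" where
  "support A = \<Union> (inc ` A)"

lemma support_subset_V: "A \<subseteq> E \<Longrightarrow> support A \<subseteq> V"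
  using inc_subset_V by (auto simp: support_def)

lemma finite_support: "A \<subseteq> E \<Longrightarrow> finite (support A)"
  using finite_subset[OF support_subset_V finite_V] .

lemma support_nonempty: "A \<subseteq> E \<Longrightarrow> A \<noteq> {} \<Longrightarrow> support A \<noteq> {}"
  using inc_nonempty by (auto simp: support_def)

lemma component_outside_support:
  assumes "v \<in> V" "v \<notin> support A"
  shows "component A v = {v}"
proof -
  have "w = v" if vw: "(v, w) \<in> reach A" for w
  proof (rule ccontr)
    assume "w \<noteq> v"
    then obtain e where "e \<in> A" "v \<in> inc e" using reach_first_edge vw by blast
    then show False using assms(2) by (auto simp: support_def)
  qed
  then show ?thesis using assms(1) by (auto simp: component_def)
qed

lemma nullity_via_support:
  assumes "A \<subseteq> E"
  shows "nullity A = int (card A) - int (card (support A)) + int (card (component A ` support A))"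
proof -
  let ?S = "support A"
  have S: "?S \<subseteq> V" "finite ?S" using support_subset_V finite_support assms by auto
  have "component A ` V = component A ` (V - ?S) \<union> component A ` ?S"
  proof -
    have "V = (V - ?S) \<union> ?S" using S by blast
    then show ?thesis by (metis image_Un)
  qed
  moreover have "component A ` (V - ?S) \<inter> component A ` ?S = {}"
  proof -
    have "component A v \<noteq> component A u" if "v \<in> V - ?S" "u \<in> ?S" for u v
    proof -
      have "u \<in> component A u" using S that by (auto simp: component_def)
      moreover have "component A v = {v}" using component_outside_support that by blast
      ultimately show ?thesis using that by auto
    qed
    then show ?thesis by blast
  qed
  moreover have "card (component A ` (V - ?S)) = card V - card ?S"
  proof -
    have "inj_on (component A) (V - ?S)"
      by (rule inj_onI) (metis DiffE component_outside_support singleton_inject)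
    then show ?thesis using S by (simp add: card_image card_Diff_subset)
  qed
  ultimately have "nc A = card V - card ?S + card (component A ` ?S)"
    unfolding nc_eq_card_components using S finite_V by (simp add: card_Un_disjoint)
  then show ?thesis using card_mono[OF finite_V S(1)] unfolding nullity_def by linarith
qed

definition end_weight :: "'e \<Rightarrow> nat" where
  "end_weight e = (if card (inc e) = 1 then 2 else 1)"

lemma deg_eq_sum_end_weight: "deg inc A v = (\<Sum>e\<in>{e\<in>A. v \<in> inc e}. end_weight e)"
  by (simp add: deg_def end_weight_def)

lemma end_weight_pos: "1 \<le> end_weight e"
  by (simp add: end_weight_def)

lemma handshake:
  assumes "A \<subseteq> E"
  shows "(\<Sum>v\<in>support A. deg inc A v) = 2 * card A"
proof -
  have "(\<Sum>v\<in>support A. deg inc A v) = (\<Sum>e\<in>A. \<Sum>v\<in>{v\<in>support A. v \<in> inc e}. end_weight e)"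
    unfolding deg_eq_sum_end_weight
    by (rule sum.swap_restrict) (use finite_edge_set finite_support assms in auto)
  also have "\<dots> = (\<Sum>e\<in>A. 2)"
  proof (rule sum.cong)
    fix e assume e: "e \<in> A"
    then have "{v\<in>support A. v \<in> inc e} = inc e" by (auto simp: support_def)
    moreover have "card (inc e) * end_weight e = 2"
      using card_inc e assms unfolding end_weight_def by auto
    ultimately show "(\<Sum>v\<in>{v\<in>support A. v \<in> inc e}. end_weight e) = 2" by simp
  qed simp
  finally show ?thesis by simp
qed

lemma cycleD:
  assumes "C \<in> cycles V E inc"
  shows "C \<subseteq> E" "C \<noteq> {}" "\<And>v. v \<in> support C \<Longrightarrow> deg inc C v = 2"
    "\<And>u w. u \<in> support C \<Longrightarrow> w \<in> support C \<Longrightarrow> (u, w) \<in> reach C"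
  using assms unfolding cycles_def support_def[symmetric] by auto

lemma cycleI:
  assumes "C \<subseteq> E" "C \<noteq> {}" "\<And>v. v \<in> support C \<Longrightarrow> deg inc C v = 2"
    "\<And>u w. u \<in> support C \<Longrightarrow> w \<in> support C \<Longrightarrow> (u, w) \<in> reach C"
  shows "C \<in> cycles V E inc"
  using assms unfolding cycles_def support_def[symmetric] by auto

lemma one_component_if_connected:
  assumes "A \<subseteq> E" "A \<noteq> {}" "\<And>u w. u \<in> support A \<Longrightarrow> w \<in> support A \<Longrightarrow> (u, w) \<in> reach A"
  shows "card (component A ` support A) = 1"
proof -
  obtain v where v: "v \<in> support A" using support_nonempty assms(1,2) by blast
  have "component A ` support A = {component A v}"
    using v assms(3) support_subset_V[OF assms(1)] component_eq_iff by blast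
  then show ?thesis by simp
qed

lemma nullity_cycle:
  assumes "C \<in> cycles V E inc"
  shows "nullity C = 1"
proof -
  note C = cycleD[OF assms]
  have "2 * card (support C) = 2 * card C"
    using handshake[OF C(1)] C(3) by simp
  then show ?thesis
    using nullity_via_support[OF C(1)] one_component_if_connected[OF C(1,2,4)] by simp
qed

lemma connected_if_one_component:
  assumes "A \<subseteq> E" "card (component A ` support A) = 1" "u \<in> support A" "w \<in> support A"
  shows "(u, w) \<in> reach A"
proof -
  obtain X where "component A ` support A = {X}" using assms(2) card_1_singletonE by blast
  then have "component A u = component A w" using assms(3,4) by blast
  moreover have "u \<in> V" "w \<in> V" using assms(1,3,4) support_subset_V by auto
  ultimately show ?thesis using component_eq_iff by blast
qed

lemma deg_ge_2_if_joined:
  assumes "B \<subseteq> E" "v \<in> support B" "\<And>e. e \<in> B \<Longrightarrow> joined (B - {e}) e"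
  shows "2 \<le> deg inc B v"
proof -
  from assms(2) obtain e where e: "e \<in> B" "v \<in> inc e" unfolding support_def by blast
  let ?T = "{e \<in> B. v \<in> inc e}"
  have T: "finite ?T" "e \<in> ?T" using finite_edge_set[OF assms(1)] e by auto
  show ?thesis
  proof (cases "card (inc e) = 1")
    case True
    then have "end_weight e = 2" by (simp add: end_weight_def)
    then show ?thesis
      unfolding deg_eq_sum_end_weight using member_le_sum[OF T(2), of end_weight] T(1) by simp
  next
    case False
    then have "card (inc e) = 2" using card_inc[of e] assms(1) e by blast
    then obtain w where w: "w \<in> inc e" "w \<noteq> v"
      unfolding card_2_iff using e(2) by blast
    have "(v, w) \<in> reach (B - {e})"
      using assms(3)[OF e(1)] w(1) e(2) unfolding joined_def by blast
    then obtain e' where e': "e' \<in> B - {e}" "v \<in> inc e'" using reach_first_edge w(2) by metis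
    have "{e, e'} \<subseteq> ?T" using e e' by auto
    then have "(\<Sum>x\<in>{e, e'}. end_weight x) \<le> (\<Sum>x\<in>?T. end_weight x)"
      by (rule sum_mono2[OF T(1)]) simp
    moreover have "(\<Sum>x\<in>{e, e'}. end_weight x) = end_weight e + end_weight e'"
      using e' by auto
    ultimately show ?thesis
      unfolding deg_eq_sum_end_weight using end_weight_pos[of e] end_weight_pos[of e'] by linarith
  qed
qed

text \<open>By minimality every edge of \<open>B\<close> closes a cycle, so all degrees are at least 2; the
  handshake lemma together with nullity 1 then forces degree exactly 2 and a single component.\<close>

lemma cycle_if_minimal_nullity_pos:
  assumes B: "B \<subseteq> E" "1 \<le> nullity B" and minimal: "\<And>B'. B' \<subset> B \<Longrightarrow> nullity B' < 1"
  shows "B \<in> cycles V E inc"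
proof -
  have "B \<noteq> {}" using B nullity_empty by auto
  then obtain e0 where "e0 \<in> B" by blast
  have joined: "joined (B - {e}) e" and nullity_B: "nullity B = 1" if e: "e \<in> B" for e
  proof -
    have "B - {e} \<subset> B" "B - {e} \<subseteq> E" using e B(1) by auto
    then have "nullity (B - {e}) < 1" "0 \<le> nullity (B - {e})" using minimal nullity_nonneg by auto
    then have "nullity (B - {e}) = 0" by linarith
    then show "joined (B - {e}) e" "nullity B = 1"
      using nullity_remove[OF B(1) e] B(2) by (cases "joined (B - {e}) e"; simp)+
  qed
  let ?S = "support B"
  have S: "finite ?S" "?S \<noteq> {}" using finite_support support_nonempty B(1) \<open>B \<noteq> {}\<close> by auto
  have deg2: "2 \<le> deg inc B v" if "v \<in> ?S" for v
    using deg_ge_2_if_joined[OF B(1) that joined] .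
  have sum_deg: "(\<Sum>v\<in>?S. deg inc B v) = 2 * card B" using handshake[OF B(1)] .
  moreover have "(\<Sum>v\<in>?S. 2) \<le> (\<Sum>v\<in>?S. deg inc B v)" using deg2 by (intro sum_mono) simp
  ultimately have "card ?S \<le> card B" by simp
  moreover have "1 \<le> card (component B ` ?S)" using S by (simp add: Suc_le_eq card_gt_0_iff)
  moreover have "int (card B) - int (card ?S) + int (card (component B ` ?S)) = 1"
    using nullity_via_support[OF B(1)] nullity_B[OF \<open>e0 \<in> B\<close>] by simp
  ultimately have one: "card (component B ` ?S) = 1" and card_B: "card B = card ?S"
    by linarith+
  have "deg inc B v = 2" if v: "v \<in> ?S" for v
  proof (rule ccontr)
    assume "deg inc B v \<noteq> 2"
    then have "2 < deg inc B v" using deg2[OF v] by simp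
    then have "(\<Sum>v\<in>?S. 2) < (\<Sum>v\<in>?S. deg inc B v)"
      using sum_strict_mono_ex1[OF S(1), of "\<lambda>_. 2" "deg inc B"] deg2 v by blast
    then show False using sum_deg card_B by simp
  qed
  then show ?thesis
    using cycleI[OF B(1) \<open>B \<noteq> {}\<close>] connected_if_one_component[OF B(1) one] by blast
qed

lemma cycle_subset_if_nullity_pos:
  assumes "A \<subseteq> E" "1 \<le> nullity A"
  obtains C where "C \<in> cycles V E inc" "C \<subseteq> A"
proof -
  obtain B where B: "B \<subseteq> A" "1 \<le> nullity B" "\<And>B'. B' \<subset> B \<Longrightarrow> \<not> 1 \<le> nullity B'"
    using obtain_minimal_subset[of A "\<lambda>B. 1 \<le> nullity B"] finite_edge_set assms by blast
  have "B \<subseteq> E" using B(1) assms(1) by blast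
  then have "B \<in> cycles V E inc"
    using cycle_if_minimal_nullity_pos B(2,3) by (simp add: not_le)
  then show ?thesis using that B(1) by blast
qed

lemma reach_stays_in_support:
  assumes "(u, w) \<in> reach C" "u \<in> support C'"
    and same_edges: "\<And>v. v \<in> support C' \<Longrightarrow> {e \<in> C. v \<in> inc e} = {e \<in> C'. v \<in> inc e}"
  shows "w \<in> support C'"
  using assms(1,2)
proof (induction rule: rtrancl_induct)
  case (step x y)
  from step(2) obtain e where e: "e \<in> C" "x \<in> inc e" "y \<in> inc e" unfolding in_edge_rel_iff by blast
  then have "e \<in> C'" using same_edges[OF step(3)[OF step(4)]] by blast
  then show ?case using e(3) unfolding support_def by blast
qed

text \<open>Both cycles are 2-regular, so at every vertex of \<open>C'\<close> they have the same edges; hence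
  the vertices of \<open>C'\<close> are closed under reachability in the connected \<open>C\<close>.\<close>

lemma cycle_subset_cycle_eq:
  assumes C: "C \<in> cycles V E inc" and C': "C' \<in> cycles V E inc" and "C' \<subseteq> C"
  shows "C' = C"
proof -
  note c = cycleD[OF C] and c' = cycleD[OF C']
  have support: "support C' \<subseteq> support C" using assms(3) by (auto simp: support_def)
  have same_edges: "{e \<in> C. v \<in> inc e} = {e \<in> C'. v \<in> inc e}" if v: "v \<in> support C'" for v
  proof (rule ccontr)
    let ?T = "{e \<in> C. v \<in> inc e}" and ?T' = "{e \<in> C'. v \<in> inc e}"
    assume "?T \<noteq> ?T'"
    moreover have "?T' \<subseteq> ?T" using assms(3) by auto
    ultimately obtain e where e: "e \<in> ?T - ?T'" by blast
    have fin: "finite ?T" using finite_edge_set[OF c(1)] by simp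
    have "deg inc C v = (\<Sum>x\<in>?T - ?T'. end_weight x) + deg inc C' v"
      unfolding deg_eq_sum_end_weight by (rule sum.subset_diff[OF \<open>?T' \<subseteq> ?T\<close> fin])
    moreover have "end_weight e \<le> (\<Sum>x\<in>?T - ?T'. end_weight x)"
      using member_le_sum[OF e, of end_weight] fin by simp
    moreover have "deg inc C v = 2" "deg inc C' v = 2" using c(3) c'(3) v support by auto
    ultimately show False using end_weight_pos[of e] by linarith
  qed
  obtain v0 where v0: "v0 \<in> support C'" using support_nonempty[OF c'(1,2)] by blast
  have in_support: "w \<in> support C'" if "w \<in> support C" for w
  proof -
    have "(v0, w) \<in> reach C" using c(4) v0 support that by blast
    then show ?thesis using reach_stays_in_support[OF _ v0 same_edges] by blast
  qed
  have "e \<in> C'" if e: "e \<in> C" for e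
  proof -
    obtain v where v: "v \<in> inc e" using inc_nonempty e c(1) by blast
    then have "v \<in> support C'" using e in_support by (auto simp: support_def)
    then show ?thesis using same_edges e v by blast
  qed
  then show ?thesis using assms(3) by blast
qed

lemma nullity_psubset_cycle:
  assumes "C \<in> cycles V E inc" "B \<subset> C"
  shows "nullity B = 0"
proof -
  have "B \<subseteq> E" using assms cycleD(1) by blast
  have "\<not> 1 \<le> nullity B"
  proof
    assume "1 \<le> nullity B"
    then obtain C' where "C' \<in> cycles V E inc" "C' \<subseteq> B"
      using cycle_subset_if_nullity_pos \<open>B \<subseteq> E\<close> by blast
    then have "C' = C" using cycle_subset_cycle_eq[OF assms(1)] assms(2) by blast
    then show False using \<open>C' \<subseteq> B\<close> assms(2) by blast
  qed
  then show ?thesis using nullity_nonneg[OF \<open>B \<subseteq> E\<close>] by linarith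
qed

lemma joined_in_cycle:
  assumes "C \<in> cycles V E inc" "e \<in> C"
  shows "joined (C - {e}) e"
proof -
  have "nullity (C - {e}) = 0" using nullity_psubset_cycle[OF assms(1)] assms(2) by blast
  then show ?thesis
    using nullity_remove[OF cycleD(1)[OF assms(1)] assms(2)] nullity_cycle[OF assms(1)]
    by (cases "joined (C - {e}) e") simp_all
qed

lemma cycle_unique_if_nullity_le_1:
  assumes "A \<subseteq> E" "nullity A \<le> 1"
    and C1: "C1 \<in> cycles V E inc" "C1 \<subseteq> A" and C2: "C2 \<in> cycles V E inc" "C2 \<subseteq> A"
  shows "C1 = C2"
proof (rule ccontr)
  assume "C1 \<noteq> C2"
  then obtain e where e: "e \<in> C1" "e \<notin> C2" using cycle_subset_cycle_eq[OF C2(1) C1(1)] by blast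
  have "joined (A - {e}) e"
    using joined_in_cycle[OF C1(1) e(1)] C1(2) reach_mono[of "C1 - {e}" "A - {e}"]
    unfolding joined_def by blast
  moreover have "e \<in> A" using e(1) C1(2) by blast
  ultimately have "nullity A = nullity (A - {e}) + 1"
    using nullity_remove[OF assms(1)] by simp
  moreover have "C2 \<subseteq> A - {e}" "A - {e} \<subseteq> E" using C2(2) e(2) assms(1) by auto
  then have "nullity C2 \<le> nullity (A - {e})" by (rule nullity_mono)
  ultimately show False using assms(2) nullity_cycle[OF C2(1)] by linarith
qed

section \<open>Edge sets with fewer than \<open>h(G)\<close> edges\<close>

lemma h_set_if_minimal_nullity_2:
  assumes B: "B \<subseteq> E" "2 \<le> nullity B" and minimal: "\<And>B'. B' \<subset> B \<Longrightarrow> nullity B' < 2"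
  shows "B \<in> h_set V E inc"
proof -
  have "B \<noteq> {}" using B nullity_empty by auto
  have less: "nullity (B - {e}) < 2" if "e \<in> B" for e
    using minimal that by blast
  have nullity_B: "nullity B = 2"
  proof -
    obtain e where "e \<in> B" using \<open>B \<noteq> {}\<close> by blast
    then have "nullity B \<le> nullity (B - {e}) + 1" "nullity (B - {e}) < 2"
      using nullity_remove[OF B(1)] less by auto
    then show ?thesis using B(2) by linarith
  qed
  have "\<not> is_bridge V inc B e" if e: "e \<in> B" for e
  proof
    assume "is_bridge V inc B e"
    then have "nc B < nc (B - {e})" unfolding is_bridge_def by blast
    moreover have "nc (B - {e}) \<le> Suc (nc B)"
      using nc_le_Suc_nc_insert[of "B - {e}" e] B(1) e by (simp add: insert_absorb subset_iff)
    moreover have "Suc (card (B - {e})) = card B"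
      using finite_edge_set[OF B(1)] e by (rule card_Suc_Diff1)
    ultimately have "nullity (B - {e}) = nullity B" unfolding nullity_def by simp
    then show False using less[OF e] nullity_B by simp
  qed
  moreover have "corank V inc B = 2" using corank_eq_nullity[OF B(1)] nullity_B by simp
  ultimately show ?thesis using B(1) by (simp add: h_set_def)
qed

lemma nullity_le_1_if_card_less_hG:
  assumes "A \<subseteq> E" "card A < hG V E inc"
  shows "nullity A \<le> 1"
proof (rule ccontr)
  assume "\<not> nullity A \<le> 1"
  then have "2 \<le> nullity A" by simp
  then obtain B where B: "B \<subseteq> A" "2 \<le> nullity B" "\<And>B'. B' \<subset> B \<Longrightarrow> \<not> 2 \<le> nullity B'"
    using obtain_minimal_subset[of A "\<lambda>B. 2 \<le> nullity B"] finite_edge_set[OF assms(1)] by blast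
  have "B \<subseteq> E" using B(1) assms(1) by blast
  then have "B \<in> h_set V E inc"
    using h_set_if_minimal_nullity_2 B(2,3) by (simp add: not_le)
  then have "hG V E inc \<le> card B" unfolding hG_def by (intro Least_le) blast
  moreover have "card B \<le> card A" using card_mono[OF finite_edge_set[OF assms(1)] B(1)] .
  ultimately show False using assms(2) by simp
qed

lemma forest_indicator_if_card_less_hG:
  assumes "A \<subseteq> E" "card A < hG V E inc"
  shows "(if nullity A = 0 then 1 else 0) = 1 - int (card {C \<in> cycles V E inc. C \<subseteq> A})"
proof (cases "nullity A = 0")
  case True
  have "C \<notin> cycles V E inc" if "C \<subseteq> A" for C
    using nullity_mono[OF that assms(1)] nullity_cycle True by force
  then have no_cycle: "{C \<in> cycles V E inc. C \<subseteq> A} = {}" by blast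
  show ?thesis using True by (simp add: no_cycle)
next
  case False
  then have "nullity A = 1"
    using nullity_le_1_if_card_less_hG[OF assms] nullity_nonneg[OF assms(1)] by linarith
  then obtain C where C: "C \<in> cycles V E inc" "C \<subseteq> A"
    using cycle_subset_if_nullity_pos[OF assms(1)] by auto
  then have "{C \<in> cycles V E inc. C \<subseteq> A} = {C}"
    using cycle_unique_if_nullity_le_1[OF assms(1)] \<open>nullity A = 1\<close> by auto
  then show ?thesis using False by simp
qed

lemma sum_forests_eq:
  fixes w :: "nat \<Rightarrow> int"
  assumes "\<And>j. hG V E inc \<le> j \<Longrightarrow> w j = 0"
  shows "(\<Sum>A\<in>Pow E. if nullity A = 0 then w (card A) else 0)
    = (\<Sum>A\<in>Pow E. w (card A))
      - (\<Sum>C\<in>{C \<in> cycles V E inc. card C < hG V E inc}. \<Sum>A\<in>{A \<in> Pow E. C \<subseteq> A}. w (card A))"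
proof -
  let ?Cy = "{C \<in> cycles V E inc. card C < hG V E inc}"
  have pointwise: "(if nullity A = 0 then w (card A) else 0)
      = w (card A) - (\<Sum>C\<in>{C \<in> ?Cy. C \<subseteq> A}. w (card A))" if "A \<subseteq> E" for A
  proof (cases "card A < hG V E inc")
    case True
    then have "card C < hG V E inc" if "C \<subseteq> A" for C
      using card_mono[OF finite_edge_set[OF \<open>A \<subseteq> E\<close>] that] by simp
    then have "{C \<in> ?Cy. C \<subseteq> A} = {C \<in> cycles V E inc. C \<subseteq> A}" by blast
    then have "(\<Sum>C\<in>{C \<in> ?Cy. C \<subseteq> A}. w (card A))
        = int (card {C \<in> cycles V E inc. C \<subseteq> A}) * w (card A)" by simp
    also have "\<dots> = w (card A) - (if nullity A = 0 then 1 else 0) * w (card A)"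
      using forest_indicator_if_card_less_hG[OF that True] by (simp add: left_diff_distrib)
    finally show ?thesis by simp
  next
    case False
    then show ?thesis using assms by simp
  qed
  have "?Cy \<subseteq> Pow E" using cycleD(1) by blast
  then have "finite ?Cy" using finite_E by (simp add: finite_subset)
  then have "(\<Sum>A\<in>Pow E. \<Sum>C\<in>{C \<in> ?Cy. C \<subseteq> A}. w (card A))
      = (\<Sum>C\<in>?Cy. \<Sum>A\<in>{A \<in> Pow E. C \<subseteq> A}. w (card A))"
    using finite_E by (intro sum.swap_restrict) simp_all
  then show ?thesis using pointwise by (simp add: sum_subtractf)
qed

lemma two_le_nullity_if_h_defined:
  assumes "h_defined V E inc"
  shows "2 \<le> nullity E"
proof -
  obtain A where "A \<subseteq> E" "corank V inc A = 2"
    using assms unfolding h_defined_def h_set_def by blast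
  then have "nullity A = 2" using corank_eq_nullity[of A] by simp
  moreover have "nullity A \<le> nullity E" using \<open>A \<subseteq> E\<close> subset_refl by (rule nullity_mono)
  ultimately show ?thesis by simp
qed

lemma xcoeff_tutte_x1:
  "xcoeff (tutte_x1 V E inc) i
    = (\<Sum>A\<in>Pow E.
         if nullity A = 0 then laurent_coeff i (int (card V) - int (nc E) - int (card A)) else 0)"
  unfolding tutte_x1_eq_sum_forests xcoeff_sum
proof (rule sum.cong)
  fix A assume "A \<in> Pow E"
  then have A: "A \<subseteq> E" by simp
  show "xcoeff (if corank V inc A = 0 then [:-1, 1:] ^ (rk V inc E - rk V inc A) else 0) i
    = (if nullity A = 0 then laurent_coeff i (int (card V) - int (nc E) - int (card A)) else 0)"
  proof (cases "nullity A = 0")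
    case True
    then have "rk V inc A = card A" using rk_eq[of A] unfolding nullity_def by linarith
    moreover have "rk V inc A \<le> rk V inc E" using nc_antimono[OF A] unfolding rk_def by simp
    ultimately show ?thesis
      using True corank_eq_nullity[OF A] rk_eq[of E] by (simp add: xcoeff_x_minus_1_power)
  qed (use corank_eq_nullity[OF A] in \<open>simp add: xcoeff_def\<close>)
qed simp

end

theorem corollary3p7:
  fixes V :: "'v set" and E :: "'e set" and inc :: "'e \<Rightarrow> 'v set" and i :: int
  assumes "wf_graph V E inc"
    and "h_defined V E inc"
    and "i > int (card V) - int (ncomp V inc E) - int (hG V E inc)"
  shows "xcoeff (tutte_x1 V E inc) i =
    binom (int (card E) - i - 1) (int (card V) - int (ncomp V inc E) - i)
    - (\<Sum>C\<in>{C\<in>cycles V E inc. card C < hG V E inc}.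
         binom (int (card E) - int (card C) - i - 1)
               (int (card E) - int (card V) + int (ncomp V inc E) - 1))"
proof -
  interpret multigraph V E inc by (rule multigraph.intro) fact
  define r where "r = int (card V) - int (ncomp V inc E)"
  have "r < int (card E)"
    using two_le_nullity_if_h_defined[OF assms(2)] unfolding nullity_def r_def by linarith
  note sum_supersets = sum_supersets_laurent_coeff[OF finite_E _ this]
  have "xcoeff (tutte_x1 V E inc) i = (\<Sum>A\<in>Pow E. laurent_coeff i (r - int (card A)))
      - (\<Sum>C\<in>{C \<in> cycles V E inc. card C < hG V E inc}.
           \<Sum>A\<in>{A \<in> Pow E. C \<subseteq> A}. laurent_coeff i (r - int (card A)))"
    using assms(3) unfolding xcoeff_tutte_x1 r_def
    by (intro sum_forests_eq laurent_coeff_eq_0) linarith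
  also have "\<dots> = binom (int (card E) - i - 1) (int (card E) - r - 1)
      - (\<Sum>C\<in>{C \<in> cycles V E inc. card C < hG V E inc}.
           binom (int (card E) - int (card C) - i - 1) (int (card E) - r - 1))"
    using sum_supersets[of "{}"] sum_supersets cycleD(1) by (simp add: Pow_def)
  also have "binom (int (card E) - i - 1) (int (card E) - r - 1)
      = binom (int (card E) - i - 1) (r - i)"
    by (subst binom_symmetric) (simp add: algebra_simps)
  finally show ?thesis unfolding r_def by (simp add: algebra_simps)
qed

end
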